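(* Let the Cholesky factorization of $\bm K_X$ be $\bm K_X=\bm L_X \bm L_X^T$, where $\bm L_X\in \mathbb R^{n\times d}$ ($d\le n$) is a full column-rank matrix, and let $r\le d$. Consider the Equalized-Opportunity fair representation problem $$\sup_{\bm f \in \mathcal A_r} \left\{(1-\lambda)\frac{1}{n^2}\left\|\bm \Theta \bm K_{X} \bm H \bm L_{Y} \right\|^2_F -\lambda\, \frac{1}{n_0^2}\left\|\bm \Theta \bm K_{X}[Y=y_0] \bm H \bm L_{S_0} \right\|^2_F\right\}, \quad 0\le \lambda<1.$$ Then a solution to this problem is $$\bm f^{\text{opt}}(X) = \bm \Theta^{\text{opt}} \left[k_X(\bm x_1, X),\cdots, k_X(\bm x_n, X)\right]^T$$ where $\bm \Theta^{\text{opt}}=\bm U^T \bm L_X^\dagger$ and the columns of $\bm U$ are eigenvectors corresponding to the $r$ largest eigenvalues of the generalized eigenvalue problem $$\left( (1-\lambda) \frac{1}{n^2} \bm L_{X}^T \bm H \bm K_{Y} \bm H \bm L_{X} -\lambda \frac{1}{n_0^2} \bm L_{X}[Y=y_0]^T \bm H \bm K_{S}[Y=y_0] \bm H \bm L_{X}[Y=y_0] \right) \bm u = \tau \left(\frac{1}{n}\,\bm L^T_X \bm H \bm L_X + \gamma \bm I\right) \bm u.$$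
   Context: Setting: $n$ samples $\bm x_1,\dots,\bm x_n$ of data $X$ with target label $Y$ and sensitive attribute $S$. The encoder $\bm f=(f_1,\dots,f_r)$ has components in a universal RKHS $\mathcal H_X$ with kernel $k_X$ and Gram matrix $\bm K_X$, parametrized (representer theorem) as $\bm f(X)=\bm\Theta[k_X(\bm x_1,X),\dots,k_X(\bm x_n,X)]^T$ with $\bm\Theta\in\mathbb R^{r\times n}$. The constraint set is $\mathcal A_r:=\{(f_1,\cdots, f_r) \mid f_i, f_j\in \mathcal H_{X},\, \mathrm{Cov} (f_i(X), f_j(X) )+\gamma\, \langle f_i, f_j\rangle_{\mathcal H_{X}}=\delta_{i,j}\}$, $\gamma>0$. $\bm H = \bm I_n-\frac{1}{n} \bm 1_n \bm 1_n^T$ is the centering matrix; $\bm K_Y=\bm L_Y\bm L_Y^T$ is the Gram matrix of a kernel on $Y$. For Equalized Opportunity, conditioning is on the single label value $Y=y_0$ (the positive class): $n_0$ is the number of samples with $Y=y_0$, $\bm K_X[Y=y_0]$ and $\bm L_X[Y=y_0]$ denote the corresponding rows of $\bm K_X$ and $\bm L_X$ restricted to those samples, $\bm K_S[Y=y_0]=\bm K_{S_0}=\bm L_{S_0}\bm L_{S_0}^T$ is the Gram matrix of a kernel on $S$ over those samples. The two terms are the empirical estimates of $\mathrm{Dep}(\bm f(X),Y)$ and $\mathrm{Dep}(\bm f(X),S\mid Y=y_0)$. $\dagger$ denotes the pseudo-inverse and $\tau$ the generalized eigenvalue. *)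

theory Defs
  imports "Jordan_Normal_Form.Matrix"
begin

definition centering :: "nat \<Rightarrow> real mat" where
  "centering m = 1\<^sub>m m - (1 / real m) \<cdot>\<^sub>m mat m m (\<lambda>_. 1)"

definition frob_sq :: "real mat \<Rightarrow> real" where
  "frob_sq M = (\<Sum>i<dim_row M. \<Sum>j<dim_col M. (M $$ (i, j))\<^sup>2)"

definition full_col_rank :: "real mat \<Rightarrow> bool" where
  "full_col_rank M \<longleftrightarrow> (\<forall>v \<in> carrier_vec (dim_col M). M *\<^sub>v v = 0\<^sub>v (dim_row M) \<longrightarrow> v = 0\<^sub>v (dim_col M))"

definition pinv :: "real mat \<Rightarrow> real mat" where
  "pinv M = (THE P. P \<in> carrier_mat (dim_col M) (dim_row M) \<and> M * P * M = M \<and> P * M * P = P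
               \<and> (M * P)\<^sup>T = M * P \<and> (P * M)\<^sup>T = P * M)"

definition emp_cov :: "nat \<Rightarrow> (nat \<Rightarrow> real) \<Rightarrow> (nat \<Rightarrow> real) \<Rightarrow> real" where
  "emp_cov n a b = (1 / real n) * (\<Sum>k<n. a k * b k)
                   - ((1 / real n) * (\<Sum>k<n. a k)) * ((1 / real n) * (\<Sum>k<n. b k))"

(* f = Theta [k(x_1,.),...,k(x_n,.)]^T belongs to A_r:
   f_i(x_k) = (Theta K)_{ik},  <f_i,f_j>_H = (Theta K Theta^T)_{ij} *)
definition in_A :: "nat \<Rightarrow> nat \<Rightarrow> real \<Rightarrow> real mat \<Rightarrow> real mat \<Rightarrow> bool" where
  "in_A n r \<gamma> K \<Theta> \<longleftrightarrow>
     (\<forall>i<r. \<forall>j<r. emp_cov n (\<lambda>k. (\<Theta> * K) $$ (i, k)) (\<lambda>k. (\<Theta> * K) $$ (j, k))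
                  + \<gamma> * (\<Theta> * K * \<Theta>\<^sup>T) $$ (i, j) = (if i = j then 1 else 0))"

definition pos_idx :: "nat \<Rightarrow> (nat \<Rightarrow> 'b) \<Rightarrow> 'b \<Rightarrow> nat \<Rightarrow> nat" where
  "pos_idx n y y0 i = sorted_list_of_set {k. k < n \<and> y k = y0} ! i"

definition n_pos :: "nat \<Rightarrow> (nat \<Rightarrow> 'b) \<Rightarrow> 'b \<Rightarrow> nat" where
  "n_pos n y y0 = card {k. k < n \<and> y k = y0}"

definition rows_pos :: "nat \<Rightarrow> (nat \<Rightarrow> 'b) \<Rightarrow> 'b \<Rightarrow> real mat \<Rightarrow> real mat" where
  "rows_pos n y y0 M = mat (n_pos n y y0) (dim_col M) (\<lambda>(i, j). M $$ (pos_idx n y y0 i, j))"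

definition cols_pos :: "nat \<Rightarrow> (nat \<Rightarrow> 'b) \<Rightarrow> 'b \<Rightarrow> real mat \<Rightarrow> real mat" where
  "cols_pos n y y0 M = mat (dim_row M) (n_pos n y y0) (\<lambda>(i, j). M $$ (i, pos_idx n y y0 j))"

definition eo_objective ::
  "nat \<Rightarrow> (nat \<Rightarrow> 'b) \<Rightarrow> 'b \<Rightarrow> real \<Rightarrow> real mat \<Rightarrow> real mat \<Rightarrow> real mat \<Rightarrow> real mat \<Rightarrow> real" where
  "eo_objective n y y0 lam K LY LS0 \<Theta> =
     (1 - lam) * (1 / (real n)\<^sup>2) * frob_sq (\<Theta> * K * centering n * LY)
     - lam * (1 / (real (n_pos n y y0))\<^sup>2)
         * frob_sq (\<Theta> * cols_pos n y y0 K * centering (n_pos n y y0) * LS0)"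

definition eo_A ::
  "nat \<Rightarrow> (nat \<Rightarrow> 'b) \<Rightarrow> 'b \<Rightarrow> real \<Rightarrow> real mat \<Rightarrow> real mat \<Rightarrow> real mat \<Rightarrow> real mat" where
  "eo_A n y y0 lam L KY KS0 =
     ((1 - lam) * (1 / (real n)\<^sup>2)) \<cdot>\<^sub>m (L\<^sup>T * centering n * KY * centering n * L)
     - (lam * (1 / (real (n_pos n y y0))\<^sup>2)) \<cdot>\<^sub>m
         ((rows_pos n y y0 L)\<^sup>T * centering (n_pos n y y0) * KS0
            * centering (n_pos n y y0) * rows_pos n y y0 L)"

definition eo_B :: "nat \<Rightarrow> real \<Rightarrow> real mat \<Rightarrow> real mat" where
  "eo_B n \<gamma> L = (1 / real n) \<cdot>\<^sub>m (L\<^sup>T * centering n * L) + \<gamma> \<cdot>\<^sub>m 1\<^sub>m (dim_col L)"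

definition top_gen_eigvecs :: "nat \<Rightarrow> real mat \<Rightarrow> real mat \<Rightarrow> real mat \<Rightarrow> bool" where
  "top_gen_eigvecs r A B U \<longleftrightarrow>
     (let d = dim_row A in
      \<exists>V \<tau>. V \<in> carrier_mat d d \<and> V\<^sup>T * B * V = 1\<^sub>m d
        \<and> (\<forall>j<d. A *\<^sub>v col V j = \<tau> j \<cdot>\<^sub>v (B *\<^sub>v col V j))
        \<and> (\<forall>i j. i \<le> j \<longrightarrow> j < d \<longrightarrow> \<tau> j \<le> \<tau> i)
        \<and> U = mat d r (\<lambda>(i, j). V $$ (i, j)))"

end

theory Submission
  imports Defs "Jordan_Normal_Form.Determinant"
begin

(* Substituting Phi = Theta L turns the constraint set A_r into {Phi. Phi B Phi^T = I} and the
   objective into trace (Phi A Phi^T), where A u = tau B u is the generalized eigenproblem of the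
   statement; moreover Theta^opt L = U^T because pinv L * L = I for L of full column rank.
   Expanding the rows of a feasible Phi in a B-orthonormal eigenbasis gives coordinates C with
   orthonormal columns, so trace (Phi A Phi^T) = sum_j tau_j w_j with weights w_j = |row j of C|^2
   in [0, 1] summing to r.  Such a weighted sum is at most the sum of the r largest tau_j, and U
   attains it (a generalized Ky Fan maximum principle). *)

lemma assoc_mult_mat_dim:
  fixes A B C :: "'a :: semiring_0 mat"
  shows "dim_col A = dim_row B \<Longrightarrow> dim_col B = dim_row C \<Longrightarrow> A * B * C = A * (B * C)"
  by (rule assoc_mult_mat[of A "dim_row A" "dim_col A" B "dim_col B" C "dim_col C"]) auto

lemma transpose_mult_dim:
  fixes A B :: "'a :: comm_semiring_0 mat"
  shows "dim_col A = dim_row B \<Longrightarrow> (A * B)\<^sup>T = B\<^sup>T * A\<^sup>T"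
  by (rule transpose_mult[of A "dim_row A" "dim_col A" B "dim_col B"]) auto

lemma transpose_mult_mult_entry:
  fixes V X :: "'a :: comm_semiring_0 mat"
  assumes V: "V \<in> carrier_mat d m" and X: "X \<in> carrier_mat d d" and "i < m" "j < m"
  shows "(V\<^sup>T * X * V) $$ (i, j) = col V i \<bullet> (X *\<^sub>v col V j)"
proof -
  have "V\<^sup>T * X * V = V\<^sup>T * (X * V)" using V X by simp
  then show ?thesis using assms by (simp add: mult_mat_vec_def)
qed

lemma mult_smult_add_mult_mat:
  fixes P X Y Q :: "'a :: comm_ring_1 mat"
  assumes P: "P \<in> carrier_mat k m" and X: "X \<in> carrier_mat m l" and Y: "Y \<in> carrier_mat m l"
    and Q: "Q \<in> carrier_mat l s"
  shows "P * (a \<cdot>\<^sub>m X + b \<cdot>\<^sub>m Y) * Q = a \<cdot>\<^sub>m (P * X * Q) + b \<cdot>\<^sub>m (P * Y * Q)"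
proof -
  have "P * (a \<cdot>\<^sub>m X + b \<cdot>\<^sub>m Y) = a \<cdot>\<^sub>m (P * X) + b \<cdot>\<^sub>m (P * Y)"
    using mult_add_distrib_mat[OF P smult_carrier_mat[OF X] smult_carrier_mat[OF Y]]
    by (simp add: mult_smult_distrib[OF P X] mult_smult_distrib[OF P Y])
  then show ?thesis
    using assms by (simp add: add_mult_distrib_mat[of _ k l] mult_smult_assoc_mat[of _ k l])
qed

lemma mult_smult_diff_mult_mat:
  fixes P X Y Q :: "'a :: comm_ring_1 mat"
  assumes P: "P \<in> carrier_mat k m" and X: "X \<in> carrier_mat m l" and Y: "Y \<in> carrier_mat m l"
    and Q: "Q \<in> carrier_mat l s"
  shows "P * (a \<cdot>\<^sub>m X - b \<cdot>\<^sub>m Y) * Q = a \<cdot>\<^sub>m (P * X * Q) - b \<cdot>\<^sub>m (P * Y * Q)"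
proof -
  have "P * (a \<cdot>\<^sub>m X - b \<cdot>\<^sub>m Y) = a \<cdot>\<^sub>m (P * X) - b \<cdot>\<^sub>m (P * Y)"
    using mult_minus_distrib_mat[OF P smult_carrier_mat[OF X] smult_carrier_mat[OF Y]]
    by (simp add: mult_smult_distrib[OF P X] mult_smult_distrib[OF P Y])
  then show ?thesis
    using assms by (simp add: minus_mult_distrib_mat[of _ k l] mult_smult_assoc_mat[of _ k l])
qed

definition trace :: "'a :: comm_ring_1 mat \<Rightarrow> 'a" where
  "trace A = (\<Sum>i<dim_row A. A $$ (i, i))"

lemma trace_smult_diff:
  assumes "A \<in> carrier_mat n n" "B \<in> carrier_mat n n"
  shows "trace (a \<cdot>\<^sub>m A - b \<cdot>\<^sub>m B) = a * trace A - b * trace B"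
  using assms unfolding trace_def by (simp add: sum_subtractf sum_distrib_left)

lemma frob_sq_eq_trace: "frob_sq M = trace (M * M\<^sup>T)"
  unfolding frob_sq_def trace_def by (simp add: scalar_prod_def power2_eq_square atLeast0LessThan)

lemma scalar_prod_self_eq_0_iff:
  fixes v :: "real vec"
  assumes "v \<in> carrier_vec n"
  shows "v \<bullet> v = 0 \<longleftrightarrow> v = 0\<^sub>v n"
  using conjugate_square_eq_0_vec[OF assms] by (simp add: conjugate_vec_def)

lemma penrose_conditions_unique:
  fixes M P Q :: "'a :: comm_ring_1 mat"
  assumes M: "M \<in> carrier_mat m k" and P: "P \<in> carrier_mat k m" and Q: "Q \<in> carrier_mat k m"
    and P1: "M * P * M = M" and P2: "P * M * P = P" and P3: "(M * P)\<^sup>T = M * P" and P4: "(P * M)\<^sup>T = P * M"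
    and Q1: "M * Q * M = M" and Q2: "Q * M * Q = Q" and Q3: "(M * Q)\<^sup>T = M * Q" and Q4: "(Q * M)\<^sup>T = Q * M"
  shows "P = Q"
proof -
  have MT_Q: "M\<^sup>T = M\<^sup>T * M * Q"
  proof -
    have "M\<^sup>T = (M * Q * M)\<^sup>T" using Q1 by simp
    also have "\<dots> = M\<^sup>T * (M * Q)\<^sup>T" using M Q by (simp add: assoc_mult_mat_dim transpose_mult_dim)
    finally show ?thesis using M Q Q3 by simp
  qed
  have MT_P: "M\<^sup>T = P * M * M\<^sup>T"
  proof -
    have "M\<^sup>T = (M * (P * M))\<^sup>T" using M P P1 by simp
    also have "\<dots> = (P * M)\<^sup>T * M\<^sup>T" using M P by (simp add: assoc_mult_mat_dim transpose_mult_dim)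
    finally show ?thesis using P4 by simp
  qed
  have "P = P * (M * P)\<^sup>T" using M P P2 P3 by simp
  also have "\<dots> = P * P\<^sup>T * M\<^sup>T" using M P by (simp add: assoc_mult_mat_dim transpose_mult_dim)
  also have "\<dots> = P * (M * P)\<^sup>T * M * Q" by (subst MT_Q) (use M P Q in \<open>simp add: assoc_mult_mat_dim transpose_mult_dim\<close>)
  also have "\<dots> = P * M * Q" using M P Q P2 P3 by (simp add: assoc_mult_mat_dim)
  finally have P_eq: "P = P * M * Q" .
  have "Q = (Q * M)\<^sup>T * Q" using M Q Q2 Q4 by simp
  also have "\<dots> = M\<^sup>T * Q\<^sup>T * Q" using M Q by (simp add: assoc_mult_mat_dim transpose_mult_dim)
  also have "\<dots> = P * M * (Q * M)\<^sup>T * Q" by (subst MT_P) (use M P Q in \<open>simp add: assoc_mult_mat_dim transpose_mult_dim\<close>)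
  also have "\<dots> = P * M * Q" using M P Q Q2 Q4 by (simp add: assoc_mult_mat_dim)
  finally show ?thesis using P_eq by simp
qed

lemma pinv_eqI:
  assumes "P \<in> carrier_mat (dim_col M) (dim_row M)"
    and "M * P * M = M" "P * M * P = P" "(M * P)\<^sup>T = M * P" "(P * M)\<^sup>T = P * M"
  shows "pinv M = P"
  unfolding pinv_def
proof (rule the_equality)
  fix Q assume "Q \<in> carrier_mat (dim_col M) (dim_row M) \<and> M * Q * M = M \<and> Q * M * Q = Q
      \<and> (M * Q)\<^sup>T = M * Q \<and> (Q * M)\<^sup>T = Q * M"
  then show "Q = P"
    using penrose_conditions_unique[of M "dim_row M" "dim_col M" Q P] assms by auto
qed (use assms in auto)

lemma full_col_rank_gram_invertible:
  assumes L: "L \<in> carrier_mat n d" and rank: "full_col_rank L"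
  obtains G where "G \<in> carrier_mat d d" "G * (L\<^sup>T * L) = 1\<^sub>m d" "(L\<^sup>T * L) * G = 1\<^sub>m d"
proof -
  have gram: "L\<^sup>T * L \<in> carrier_mat d d" using L by auto
  have "det (L\<^sup>T * L) \<noteq> 0"
  proof
    assume "det (L\<^sup>T * L) = 0"
    then obtain v where v: "v \<in> carrier_vec d" "v \<noteq> 0\<^sub>v d" and "(L\<^sup>T * L) *\<^sub>v v = 0\<^sub>v d"
      using det_0_iff_vec_prod_zero_field[OF gram] by auto
    then have "L\<^sup>T *\<^sub>v (L *\<^sub>v v) = 0\<^sub>v d" using L by auto
    then have "(L *\<^sub>v v) \<bullet> (L *\<^sub>v v) = 0"
      using transpose_vec_mult_scalar[OF L v(1), of "L *\<^sub>v v"] L v(1) by auto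
    moreover have "L *\<^sub>v v \<in> carrier_vec n" by (rule mult_mat_vec_carrier[OF L v(1)])
    ultimately have "L *\<^sub>v v = 0\<^sub>v n" using scalar_prod_self_eq_0_iff by blast
    then show False using rank L v unfolding full_col_rank_def by auto
  qed
  then show ?thesis
    using that det_non_zero_imp_unit[OF gram, of undefined] unfolding Units_def ring_mat_simps by auto
qed

lemma pinv_full_col_rank:
  assumes L: "L \<in> carrier_mat n d" and rank: "full_col_rank L"
  shows "pinv L \<in> carrier_mat d n" and "pinv L * L = 1\<^sub>m d"
proof -
  obtain G where G: "G \<in> carrier_mat d d" and left: "G * (L\<^sup>T * L) = 1\<^sub>m d" and right: "(L\<^sup>T * L) * G = 1\<^sub>m d"
    using full_col_rank_gram_invertible[OF assms] .
  have "G\<^sup>T * (L\<^sup>T * L) = ((L\<^sup>T * L) * G)\<^sup>T"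
    using L G by (simp add: assoc_mult_mat_dim transpose_mult_dim)
  then have left_T: "G\<^sup>T * (L\<^sup>T * L) = 1\<^sub>m d" using right by simp
  have "G\<^sup>T = G\<^sup>T * ((L\<^sup>T * L) * G)" using G right by simp
  also have "\<dots> = G\<^sup>T * (L\<^sup>T * L) * G" using L G by (simp add: assoc_mult_mat_dim)
  finally have sym: "G\<^sup>T = G" using G left_T by simp
  define P where "P = G * L\<^sup>T"
  have P: "P \<in> carrier_mat d n" unfolding P_def using L G by auto
  have PL: "P * L = 1\<^sub>m d" unfolding P_def using L G left by (simp add: assoc_mult_mat_dim)
  have "pinv L = P"
  proof (rule pinv_eqI)
    show "P \<in> carrier_mat (dim_col L) (dim_row L)" using L P by simp
    show "L * P * L = L" using L P PL by (simp add: assoc_mult_mat_dim)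
    show "P * L * P = P" using P PL by simp
    show "(P * L)\<^sup>T = P * L" unfolding PL by simp
    show "(L * P)\<^sup>T = L * P" unfolding P_def using L G sym by (simp add: assoc_mult_mat_dim transpose_mult_dim)
  qed
  then show "pinv L \<in> carrier_mat d n" and "pinv L * L = 1\<^sub>m d" using P PL by auto
qed

lemma gen_eigvecs_diagonalize:
  fixes A B W :: "real mat"
  assumes A: "A \<in> carrier_mat d d" and B: "B \<in> carrier_mat d d" and W: "W \<in> carrier_mat d d"
    and orth: "W\<^sup>T * B * W = 1\<^sub>m d" and eig: "\<forall>j<d. A *\<^sub>v col W j = \<tau> j \<cdot>\<^sub>v (B *\<^sub>v col W j)"
    and ij: "i < d" "j < d"
  shows "(W\<^sup>T * A * W) $$ (i, j) = (if i = j then \<tau> j else 0)"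
proof -
  have "(W\<^sup>T * A * W) $$ (i, j) = \<tau> j * (col W i \<bullet> (B *\<^sub>v col W j))"
    using transpose_mult_mult_entry[OF W A ij] eig ij W B by simp
  also have "col W i \<bullet> (B *\<^sub>v col W j) = (if i = j then 1 else 0)"
    using transpose_mult_mult_entry[OF W B ij] orth ij by simp
  finally show ?thesis by simp
qed

(* C = W^T B Phi^T are the coordinates of the rows of Phi in the B-orthonormal eigenbasis W:
   Phi^T = W C, because W^T B is the inverse of W. *)
lemma quadratic_forms_in_gen_eigenbasis:
  fixes A B W \<Phi> :: "real mat"
  assumes A: "A \<in> carrier_mat d d" and B: "B \<in> carrier_mat d d" and W: "W \<in> carrier_mat d d"
    and orth: "W\<^sup>T * B * W = 1\<^sub>m d" and eig: "\<forall>j<d. A *\<^sub>v col W j = \<tau> j \<cdot>\<^sub>v (B *\<^sub>v col W j)"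
    and \<Phi>: "\<Phi> \<in> carrier_mat r d"
  defines "C \<equiv> W\<^sup>T * B * \<Phi>\<^sup>T"
  shows "trace (\<Phi> * A * \<Phi>\<^sup>T) = (\<Sum>j<d. \<tau> j * (\<Sum>k<r. (C $$ (j, k))\<^sup>2))"
    and "\<Phi> * B * \<Phi>\<^sup>T = C\<^sup>T * C"
proof -
  have C: "C \<in> carrier_mat d r" unfolding C_def using W B \<Phi> by auto
  have inv: "W * (W\<^sup>T * B) = 1\<^sub>m d"
    by (rule mat_mult_left_right_inverse[of _ d]) (use W B orth in \<open>auto simp: assoc_mult_mat_dim\<close>)
  have "W * C = (W * (W\<^sup>T * B)) * \<Phi>\<^sup>T" unfolding C_def using W B \<Phi> by (simp add: assoc_mult_mat_dim)
  then have \<Phi>T: "\<Phi>\<^sup>T = W * C" using inv \<Phi> by simp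
  then have \<Phi>_eq: "\<Phi> = C\<^sup>T * W\<^sup>T" using W C by (metis transpose_mult transpose_transpose)
  have congr: "\<Phi> * X * \<Phi>\<^sup>T = C\<^sup>T * (W\<^sup>T * X * W) * C" if X: "X \<in> carrier_mat d d" for X
    unfolding \<Phi>T by (subst \<Phi>_eq) (use W C X in \<open>simp add: assoc_mult_mat_dim\<close>)
  have "trace (\<Phi> * A * \<Phi>\<^sup>T) = (\<Sum>k<r. (C\<^sup>T * (W\<^sup>T * A * W) * C) $$ (k, k))"
    unfolding congr[OF A] trace_def using C by simp
  also have "\<dots> = (\<Sum>k<r. \<Sum>j<d. \<tau> j * (C $$ (j, k))\<^sup>2)"
  proof (intro sum.cong refl)
    fix k assume "k \<in> {..<r}"
    then have k: "k < r" by simp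
    have "(C\<^sup>T * (W\<^sup>T * A * W) * C) $$ (k, k)
        = (\<Sum>l<d. (\<Sum>j<d. C $$ (j, k) * (W\<^sup>T * A * W) $$ (j, l)) * C $$ (l, k))"
      using C W A k by (simp add: scalar_prod_def atLeast0LessThan)
    also have "\<dots> = (\<Sum>l<d. \<tau> l * (C $$ (l, k))\<^sup>2)"
      by (intro sum.cong refl)
        (simp add: gen_eigvecs_diagonalize[OF A B W orth eig] power2_eq_square if_distrib[of "times _"] cong: if_cong)
    finally show "(C\<^sup>T * (W\<^sup>T * A * W) * C) $$ (k, k) = (\<Sum>j<d. \<tau> j * (C $$ (j, k))\<^sup>2)" .
  qed
  also have "\<dots> = (\<Sum>j<d. \<tau> j * (\<Sum>k<r. (C $$ (j, k))\<^sup>2))"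
    by (subst sum.swap) (simp add: sum_distrib_left)
  finally show "trace (\<Phi> * A * \<Phi>\<^sup>T) = (\<Sum>j<d. \<tau> j * (\<Sum>k<r. (C $$ (j, k))\<^sup>2))" .
  show "\<Phi> * B * \<Phi>\<^sup>T = C\<^sup>T * C" using congr[OF B] orth C by simp
qed

lemma orthonormal_columns_row_sq_norms:
  fixes C :: "real mat"
  assumes C: "C \<in> carrier_mat d r" and orth: "C\<^sup>T * C = 1\<^sub>m r"
  shows "j < d \<Longrightarrow> (\<Sum>k<r. (C $$ (j, k))\<^sup>2) \<le> 1"
    and "(\<Sum>j<d. \<Sum>k<r. (C $$ (j, k))\<^sup>2) = real r"
proof -
  let ?P = "C * C\<^sup>T"
  have P_entry: "?P $$ (i, j) = (\<Sum>k<r. C $$ (i, k) * C $$ (j, k))" if "i < d" "j < d" for i j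
    using C that by (simp add: scalar_prod_def atLeast0LessThan)
  have idem: "?P * ?P = ?P"
  proof -
    have "?P * ?P = C * (C\<^sup>T * C) * C\<^sup>T" using C by (simp add: assoc_mult_mat_dim)
    then show ?thesis using orth C by simp
  qed
  assume j: "j < d"
  have diag: "?P $$ (j, j) = (\<Sum>k<r. (C $$ (j, k))\<^sup>2)"
    using P_entry[OF j j] by (simp add: power2_eq_square)
  \<comment> \<open>\<open>P = C C\<^sup>T\<close> is a symmetric idempotent, so \<open>P\<^sub>j\<^sub>j = \<Sum>\<^sub>i P\<^sub>i\<^sub>j\<^sup>2 \<ge> P\<^sub>j\<^sub>j\<^sup>2\<close>.\<close>
  have "(?P $$ (j, j))\<^sup>2 \<le> (\<Sum>i<d. (?P $$ (i, j))\<^sup>2)"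
    by (rule member_le_sum[where f = "\<lambda>i. (?P $$ (i, j))\<^sup>2"]) (use j in auto)
  also have "\<dots> = (?P * ?P) $$ (j, j)"
    using C j by (simp add: scalar_prod_def atLeast0LessThan P_entry power2_eq_square mult.commute)
  finally have sq_le: "(?P $$ (j, j))\<^sup>2 \<le> ?P $$ (j, j)" unfolding idem .
  show "(\<Sum>k<r. (C $$ (j, k))\<^sup>2) \<le> 1"
    unfolding diag[symmetric]
    by (rule ccontr) (use sq_le in \<open>simp add: power2_eq_square not_le mult_strict_left_mono\<close>)
next
  have "(\<Sum>j<d. \<Sum>k<r. (C $$ (j, k))\<^sup>2) = (\<Sum>k<r. (C\<^sup>T * C) $$ (k, k))"
    using C by (subst sum.swap) (simp add: scalar_prod_def atLeast0LessThan power2_eq_square)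
  then show "(\<Sum>j<d. \<Sum>k<r. (C $$ (j, k))\<^sup>2) = real r" using orth by simp
qed

lemma sum_weighted_le_sum_top:
  fixes \<tau> w :: "nat \<Rightarrow> real"
  assumes "r \<le> d" and antimono: "\<And>i j. i \<le> j \<Longrightarrow> j < d \<Longrightarrow> \<tau> j \<le> \<tau> i"
    and w: "\<And>j. j < d \<Longrightarrow> 0 \<le> w j \<and> w j \<le> 1" and sum_w: "(\<Sum>j<d. w j) = real r"
  shows "(\<Sum>j<d. \<tau> j * w j) \<le> (\<Sum>j<r. \<tau> j)"
proof -
  define e where "e j = (if j < r then 1 else 0 :: real)" for j
  define c where "c = \<tau> (r - 1)"
  have sum_e: "(\<Sum>j<d. f j * e j) = (\<Sum>j<r. f j)" for f :: "nat \<Rightarrow> real"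
  proof -
    have "(\<Sum>j<d. f j * e j) = (\<Sum>j\<in>{..<d} \<inter> {..<r}. f j)"
      unfolding e_def by (simp add: sum.inter_restrict if_distrib[of "times _"] lessThan_def cong: if_cong)
    also have "{..<d} \<inter> {..<r} = {..<r}" using \<open>r \<le> d\<close> by auto
    finally show ?thesis .
  qed
  \<comment> \<open>Each term \<open>(\<tau> j - c) (w j - e j)\<close> is nonpositive, since \<open>w j \<le> 1 = e j\<close> exactly where \<open>\<tau> j \<ge> c\<close>.\<close>
  have "(\<tau> j - c) * (w j - e j) \<le> 0" if j: "j < d" for j
  proof (cases "j < r")
    case True
    then have "c \<le> \<tau> j" unfolding c_def using antimono[of j "r - 1"] j \<open>r \<le> d\<close> by simp
    then show ?thesis using w[OF j] True unfolding e_def by (simp add: mult_nonneg_nonpos)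
  next
    case False
    then have "\<tau> j \<le> c" unfolding c_def using antimono j by simp
    then show ?thesis using w[OF j] False unfolding e_def by (simp add: mult_nonpos_nonneg)
  qed
  then have "(\<Sum>j<d. (\<tau> j - c) * (w j - e j)) \<le> 0" by (intro sum_nonpos) simp
  moreover have "(\<Sum>j<d. (\<tau> j - c) * (w j - e j))
      = (\<Sum>j<d. \<tau> j * w j) - (\<Sum>j<d. \<tau> j * e j) - c * (\<Sum>j<d. w j) + c * (\<Sum>j<d. 1 * e j)"
    by (simp add: left_diff_distrib right_diff_distrib sum_subtractf sum_distrib_left)
  ultimately show ?thesis unfolding sum_e sum_w by simp
qed

lemma top_gen_eigvecs_max_trace:
  fixes A B U :: "real mat"
  assumes A: "A \<in> carrier_mat d d" and B: "B \<in> carrier_mat d d" and "r \<le> d"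
    and top: "top_gen_eigvecs r A B U"
  shows "U \<in> carrier_mat d r" and "U\<^sup>T * B * U = 1\<^sub>m r"
    and "\<And>\<Phi>. \<Phi> \<in> carrier_mat r d \<Longrightarrow> \<Phi> * B * \<Phi>\<^sup>T = 1\<^sub>m r \<Longrightarrow> trace (\<Phi> * A * \<Phi>\<^sup>T) \<le> trace (U\<^sup>T * A * U)"
proof -
  obtain W \<tau> where W: "W \<in> carrier_mat d d" and orth: "W\<^sup>T * B * W = 1\<^sub>m d"
    and eig: "\<forall>j<d. A *\<^sub>v col W j = \<tau> j \<cdot>\<^sub>v (B *\<^sub>v col W j)"
    and antimono: "\<forall>i j. i \<le> j \<longrightarrow> j < d \<longrightarrow> \<tau> j \<le> \<tau> i"
    and U_def: "U = mat d r (\<lambda>(i, j). W $$ (i, j))"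
    using top A unfolding top_gen_eigvecs_def Let_def by auto
  show U: "U \<in> carrier_mat d r" unfolding U_def by simp
  have block: "(U\<^sup>T * X * U) $$ (i, j) = (W\<^sup>T * X * W) $$ (i, j)"
    if "X \<in> carrier_mat d d" "i < r" "j < r" for X i j
  proof -
    have "col U k = col W k" if "k < r" for k
      using that \<open>r \<le> d\<close> W unfolding U_def by (auto intro!: eq_vecI)
    then show ?thesis
      using that \<open>r \<le> d\<close> transpose_mult_mult_entry[OF U] transpose_mult_mult_entry[OF W] by simp
  qed
  show "U\<^sup>T * B * U = 1\<^sub>m r"
  proof (rule eq_matI)
    fix i j assume "i < dim_row (1\<^sub>m r)" "j < dim_col (1\<^sub>m r)"
    then have ij: "i < r" "j < r" by simp_all
    then show "(U\<^sup>T * B * U) $$ (i, j) = 1\<^sub>m r $$ (i, j)"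
      unfolding block[OF B ij] orth using \<open>r \<le> d\<close> by simp
  qed (use U in simp_all)
  have "trace (U\<^sup>T * A * U) = (\<Sum>j<r. (U\<^sup>T * A * U) $$ (j, j))"
    unfolding trace_def using U by simp
  also have "\<dots> = (\<Sum>j<r. \<tau> j)"
    using \<open>r \<le> d\<close> by (intro sum.cong refl) (simp add: block[OF A] gen_eigvecs_diagonalize[OF A B W orth eig])
  finally have trace_U: "trace (U\<^sup>T * A * U) = (\<Sum>j<r. \<tau> j)" .
  fix \<Phi> assume \<Phi>: "\<Phi> \<in> carrier_mat r d" and \<Phi>_orth: "\<Phi> * B * \<Phi>\<^sup>T = 1\<^sub>m r"
  let ?C = "W\<^sup>T * B * \<Phi>\<^sup>T"
  have C: "?C \<in> carrier_mat d r" using W B \<Phi> by auto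
  have C_orth: "?C\<^sup>T * ?C = 1\<^sub>m r"
    using quadratic_forms_in_gen_eigenbasis(2)[OF A B W orth eig \<Phi>] \<Phi>_orth by simp
  have "trace (\<Phi> * A * \<Phi>\<^sup>T) = (\<Sum>j<d. \<tau> j * (\<Sum>k<r. (?C $$ (j, k))\<^sup>2))"
    by (rule quadratic_forms_in_gen_eigenbasis(1)[OF A B W orth eig \<Phi>])
  also have "\<dots> \<le> (\<Sum>j<r. \<tau> j)"
    using orthonormal_columns_row_sq_norms[OF C C_orth] antimono \<open>r \<le> d\<close>
    by (intro sum_weighted_le_sum_top) (auto intro: sum_nonneg)
  finally show "trace (\<Phi> * A * \<Phi>\<^sup>T) \<le> trace (U\<^sup>T * A * U)" unfolding trace_U .
qed

lemma centering_dims[simp]: "dim_row (centering m) = m" "dim_col (centering m) = m"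
  unfolding centering_def by simp_all

lemma centering_entry:
  "i < m \<Longrightarrow> j < m \<Longrightarrow> centering m $$ (i, j) = (if i = j then 1 else 0) - 1 / real m"
  unfolding centering_def by simp

lemma transpose_centering[simp]: "(centering m)\<^sup>T = centering m"
  by (rule eq_matI) (auto simp: centering_entry)

lemma emp_cov_rows_eq_centered_gram:
  assumes F: "F \<in> carrier_mat r n" and i: "i < r" and j: "j < r"
  shows "emp_cov n (\<lambda>k. F $$ (i, k)) (\<lambda>k. F $$ (j, k)) = (F * centering n * F\<^sup>T) $$ (i, j) / real n"
proof -
  have "(F * centering n * F\<^sup>T) $$ (i, j)
      = (\<Sum>l<n. (\<Sum>k<n. F $$ (i, k) * ((if k = l then 1 else 0) - 1 / real n)) * F $$ (j, l))"
    using F i j by (simp add: scalar_prod_def centering_entry atLeast0LessThan)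
  also have "\<dots> = (\<Sum>l<n. (F $$ (i, l) - (\<Sum>k<n. F $$ (i, k)) / real n) * F $$ (j, l))"
  proof (intro sum.cong refl arg_cong2[where f = times])
    fix l assume "l \<in> {..<n}"
    show "(\<Sum>k<n. F $$ (i, k) * ((if k = l then 1 else 0) - 1 / real n))
        = F $$ (i, l) - (\<Sum>k<n. F $$ (i, k)) / real n"
      using \<open>l \<in> {..<n}\<close>
      by (simp add: right_diff_distrib sum_subtractf sum_divide_distrib if_distrib[of "times _"] cong: if_cong)
  qed
  also have "\<dots> = (\<Sum>l<n. F $$ (i, l) * F $$ (j, l)) - (\<Sum>k<n. F $$ (i, k)) / real n * (\<Sum>l<n. F $$ (j, l))"
    by (simp add: left_diff_distrib sum_subtractf sum_distrib_left)
  finally show ?thesis unfolding emp_cov_def by (simp add: diff_divide_distrib)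
qed

lemma pos_idx_less:
  assumes "i < n_pos n y y0"
  shows "pos_idx n y y0 i < n"
proof -
  let ?S = "{k. k < n \<and> y k = y0}"
  have "sorted_list_of_set ?S ! i \<in> set (sorted_list_of_set ?S)"
    using assms unfolding n_pos_def by (intro nth_mem) simp
  then show ?thesis unfolding pos_idx_def by simp
qed

lemma cols_pos_mult_transpose:
  assumes "L \<in> carrier_mat n d"
  shows "cols_pos n y y0 (L * L\<^sup>T) = L * (rows_pos n y y0 L)\<^sup>T"
  using assms pos_idx_less[of _ n y y0]
  by (intro eq_matI) (auto simp: cols_pos_def rows_pos_def scalar_prod_def)

lemma in_A_iff_B_orthonormal:
  assumes L: "L \<in> carrier_mat n d" and T: "\<Theta> \<in> carrier_mat r n"
  shows "in_A n r \<gamma> (L * L\<^sup>T) \<Theta> \<longleftrightarrow> (\<Theta> * L) * eo_B n \<gamma> L * (\<Theta> * L)\<^sup>T = 1\<^sub>m r"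
proof -
  let ?F = "\<Theta> * (L * L\<^sup>T)"
  define M where "M = (\<Theta> * L) * eo_B n \<gamma> L * (\<Theta> * L)\<^sup>T"
  note dims = carrier_matD[OF L] carrier_matD[OF T]
  have F: "?F \<in> carrier_mat r n" and M: "M \<in> carrier_mat r r"
    unfolding M_def eo_B_def by (simp_all add: carrier_matI dims)
  have "M = (1 / real n) \<cdot>\<^sub>m ((\<Theta> * L) * (L\<^sup>T * centering n * L) * (\<Theta> * L)\<^sup>T)
        + \<gamma> \<cdot>\<^sub>m ((\<Theta> * L) * 1\<^sub>m d * (\<Theta> * L)\<^sup>T)"
    unfolding M_def eo_B_def dims
    by (rule mult_smult_add_mult_mat[where k = r and m = d and l = d and s = r]) (simp_all add: carrier_matI dims)
  also have "\<dots> = (1 / real n) \<cdot>\<^sub>m (?F * centering n * ?F\<^sup>T) + \<gamma> \<cdot>\<^sub>m (?F * \<Theta>\<^sup>T)"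
    by (simp add: assoc_mult_mat_dim transpose_mult_dim dims)
  finally have entries: "M $$ (i, j)
      = emp_cov n (\<lambda>k. ?F $$ (i, k)) (\<lambda>k. ?F $$ (j, k)) + \<gamma> * (?F * \<Theta>\<^sup>T) $$ (i, j)"
    if "i < r" "j < r" for i j
    using emp_cov_rows_eq_centered_gram[OF F that] that by (simp add: dims)
  have "in_A n r \<gamma> (L * L\<^sup>T) \<Theta> \<longleftrightarrow> (\<forall>i<r. \<forall>j<r. M $$ (i, j) = 1\<^sub>m r $$ (i, j))"
    unfolding in_A_def by (simp add: entries)
  also have "\<dots> \<longleftrightarrow> M = 1\<^sub>m r"
  proof
    assume "\<forall>i<r. \<forall>j<r. M $$ (i, j) = 1\<^sub>m r $$ (i, j)"
    then show "M = 1\<^sub>m r" using M by (intro eq_matI) auto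
  qed simp
  finally show ?thesis unfolding M_def .
qed

lemma eo_objective_eq_trace:
  assumes L: "L \<in> carrier_mat n d" and T: "\<Theta> \<in> carrier_mat r n"
    and LY: "LY \<in> carrier_mat n p" and LS0: "LS0 \<in> carrier_mat (n_pos n y y0) q"
  shows "eo_objective n y y0 lam (L * L\<^sup>T) LY LS0 \<Theta>
    = trace ((\<Theta> * L) * eo_A n y y0 lam L (LY * LY\<^sup>T) (LS0 * LS0\<^sup>T) * (\<Theta> * L)\<^sup>T)"
proof -
  let ?np = "n_pos n y y0"
  let ?Lp = "rows_pos n y y0 L"
  let ?H = "centering n"
  let ?Hp = "centering ?np"
  let ?X = "L\<^sup>T * ?H * (LY * LY\<^sup>T) * ?H * L"
  let ?Xp = "?Lp\<^sup>T * ?Hp * (LS0 * LS0\<^sup>T) * ?Hp * ?Lp"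
  note dims = carrier_matD[OF L] carrier_matD[OF T] carrier_matD[OF LY] carrier_matD[OF LS0]
  have dims_p: "dim_row ?Lp = ?np" "dim_col ?Lp = d" using L by (simp_all add: rows_pos_def)
  have X: "?X \<in> carrier_mat d d" and Xp: "?Xp \<in> carrier_mat d d"
    by (simp_all add: carrier_matI dims dims_p)
  have sandwich: "(\<Theta> * L) * ?X * (\<Theta> * L)\<^sup>T \<in> carrier_mat r r" "(\<Theta> * L) * ?Xp * (\<Theta> * L)\<^sup>T \<in> carrier_mat r r"
    by (simp_all add: carrier_matI dims dims_p)
  have frob: "frob_sq (\<Theta> * (L * L\<^sup>T) * ?H * LY) = trace ((\<Theta> * L) * ?X * (\<Theta> * L)\<^sup>T)"
    unfolding frob_sq_eq_trace by (simp add: assoc_mult_mat_dim transpose_mult_dim dims)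
  have frob_p: "frob_sq (\<Theta> * cols_pos n y y0 (L * L\<^sup>T) * ?Hp * LS0) = trace ((\<Theta> * L) * ?Xp * (\<Theta> * L)\<^sup>T)"
    unfolding frob_sq_eq_trace cols_pos_mult_transpose[OF L]
    by (simp add: assoc_mult_mat_dim transpose_mult_dim dims dims_p)
  have "(\<Theta> * L) * eo_A n y y0 lam L (LY * LY\<^sup>T) (LS0 * LS0\<^sup>T) * (\<Theta> * L)\<^sup>T
     = ((1 - lam) * (1 / (real n)\<^sup>2)) \<cdot>\<^sub>m ((\<Theta> * L) * ?X * (\<Theta> * L)\<^sup>T)
       - (lam * (1 / (real ?np)\<^sup>2)) \<cdot>\<^sub>m ((\<Theta> * L) * ?Xp * (\<Theta> * L)\<^sup>T)"
    unfolding eo_A_def dims by (rule mult_smult_diff_mult_mat[OF _ X Xp]) (use L T in auto)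
  then show ?thesis
    unfolding eo_objective_def frob frob_p by (simp only: trace_smult_diff[OF sandwich])
qed

theorem theorem1:
  fixes n d r p q :: nat
    and K L LY LS0 U :: "real mat"
    and y :: "nat \<Rightarrow> 'b" and y0 :: 'b
    and lam \<gamma> :: real
  assumes "L \<in> carrier_mat n d" and "d \<le> n" and "full_col_rank L"
    and "K = L * L\<^sup>T"
    and "r \<le> d"
    and "LY \<in> carrier_mat n p"
    and "LS0 \<in> carrier_mat (n_pos n y y0) q"
    and "0 \<le> lam" and "lam < 1" and "\<gamma> > 0"
    and "top_gen_eigvecs r (eo_A n y y0 lam L (LY * LY\<^sup>T) (LS0 * LS0\<^sup>T)) (eo_B n \<gamma> L) U"
  shows "in_A n r \<gamma> K (U\<^sup>T * pinv L)
    \<and> (\<forall>\<Theta> \<in> carrier_mat r n. in_A n r \<gamma> K \<Theta> \<longrightarrow>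
          eo_objective n y y0 lam K LY LS0 \<Theta> \<le> eo_objective n y y0 lam K LY LS0 (U\<^sup>T * pinv L))"
proof -
  note L = assms(1) and K = assms(4) and LY = assms(6) and LS0 = assms(7)
  let ?A = "eo_A n y y0 lam L (LY * LY\<^sup>T) (LS0 * LS0\<^sup>T)"
  let ?B = "eo_B n \<gamma> L"
  have A: "?A \<in> carrier_mat d d" and B: "?B \<in> carrier_mat d d"
    unfolding eo_A_def eo_B_def by (intro carrier_matI; simp add: rows_pos_def carrier_matD[OF L])+
  note top = top_gen_eigvecs_max_trace[OF A B assms(5,11)]
  have left_inv: "pinv L \<in> carrier_mat d n" "pinv L * L = 1\<^sub>m d"
    using pinv_full_col_rank[OF L assms(3)] by auto
  have UT: "U\<^sup>T \<in> carrier_mat r d" using top(1) by simp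
  have opt: "U\<^sup>T * pinv L \<in> carrier_mat r n" "U\<^sup>T * pinv L * L = U\<^sup>T"
    using mult_carrier_mat[OF UT left_inv(1)] assoc_mult_mat[OF UT left_inv(1) L] left_inv(2) UT by simp_all
  show ?thesis
  proof (intro conjI ballI impI)
    show "in_A n r \<gamma> K (U\<^sup>T * pinv L)"
      unfolding K in_A_iff_B_orthonormal[OF L opt(1)] opt(2) using top(2) by simp
  next
    fix \<Theta> assume \<Theta>: "\<Theta> \<in> carrier_mat r n" and feasible: "in_A n r \<gamma> K \<Theta>"
    from feasible have "(\<Theta> * L) * ?B * (\<Theta> * L)\<^sup>T = 1\<^sub>m r" unfolding K in_A_iff_B_orthonormal[OF L \<Theta>] .
    then have "trace ((\<Theta> * L) * ?A * (\<Theta> * L)\<^sup>T) \<le> trace (U\<^sup>T * ?A * U)"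
      using top(3)[OF mult_carrier_mat[OF \<Theta> L]] by simp
    then show "eo_objective n y y0 lam K LY LS0 \<Theta> \<le> eo_objective n y y0 lam K LY LS0 (U\<^sup>T * pinv L)"
      unfolding K eo_objective_eq_trace[OF L \<Theta> LY LS0] eo_objective_eq_trace[OF L opt(1) LY LS0] opt(2)
      by simp
  qed
qed

end
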